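(* Assume $\mathfrak p=\mathfrak p_1\oplus\mathfrak p_2$ with $\mathfrak p_1,\mathfrak p_2$ $\mathrm{Ad}(K)$-irreducible and inequivalent, that $g_B$ is Einstein, $d_1=d_2$, $[111]=[222]$ and $[112]=[122]>0$. Then $g_B$ is a global maximum of $\mathrm{scal}|_{\mathcal M_1^G}$ if and only if $g_B$ is the unique $G$-invariant Einstein metric on $G/K$ up to scaling. Otherwise $g_B$ is a local minimum of $\mathrm{scal}|_{\mathcal M_1^G}$ and there exist exactly two other unit-volume $G$-invariant Einstein metrics, both local maxima of $\mathrm{scal}|_{\mathcal M_1^G}$, at least one of them a global maximum.
   Context: Let $G$ be a compact connected semisimple Lie group with Lie algebra $\mathfrak g$ and Killing form $B$, $K\subset G$ a closed subgroup with Lie algebra $\mathfrak k$, $\mathfrak p$ the $B$-orthogonal complement of $\mathfrak k$, and $g_B$ the standard metric on $G/K$, given on $\mathfrak p$ by $\langle\cdot,\cdot\rangle=-B|_{\mathfrak p\times\mathfrak p}$. For a $\langle\cdot,\cdot\rangle$-orthogonal decomposition $\mathfrak p=\mathfrak p_1\oplus\dots\oplus\mathfrak p_r$ into $\mathrm{Ad}(K)$-invariant subspaces with $d_i=\dim\mathfrak p_i$, the structural constants are $[ijk]=\sum_{\alpha,\beta,\gamma}\langle[X^i_\alpha,X^j_\beta],X^k_\gamma\rangle^2$, where $\{X^i_\alpha\}$ is an orthonormal basis of $\mathfrak p_i$; they are symmetric in $i,j,k$. When $\mathfrak p=\mathfrak p_1\oplus\mathfrak p_2$ with inequivalent irreducible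 summands, every $G$-invariant metric is of the form $x_1\langle\cdot,\cdot\rangle|_{\mathfrak p_1}+x_2\langle\cdot,\cdot\rangle|_{\mathfrak p_2}$ with $x_1,x_2>0$. $\mathcal M_1^G$ denotes the set of unit-volume $G$-invariant metrics (volume normalized as that of $g_B$) and $\mathrm{scal}$ the scalar curvature function on it; its critical points are exactly the $G$-invariant Einstein metrics. *)

theory Defs
  imports "HOL-Analysis.Analysis"
begin

text \<open>A G-invariant metric x1 <.,.>|p1 + x2 <.,.>|p2 is encoded by the pair (x1, x2);
  the standard metric g_B is (1, 1). Summand indices are 1 and 2.
  The structure constants [ijk] are a function c :: nat => nat => nat => real,
  and the dimensions d_i a function d :: nat => nat.\<close>

definition comp :: "real \<times> real \<Rightarrow> nat \<Rightarrow> real" where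
  "comp x i = (if i = 1 then fst x else snd x)"

text \<open>Scalar curvature of a G-invariant metric (Wang-Ziller formula, normalised by -B):
  scal = 1/2 sum_i d_i / x_i - 1/4 sum_{i,j,k} [ijk] x_k / (x_i x_j).\<close>
definition scal :: "(nat \<Rightarrow> nat \<Rightarrow> nat \<Rightarrow> real) \<Rightarrow> (nat \<Rightarrow> nat) \<Rightarrow> real \<times> real \<Rightarrow> real" where
  "scal c d x =
     1/2 * (\<Sum>i\<in>{1,2}. real (d i) / comp x i)
     - 1/4 * (\<Sum>i\<in>{1,2}. \<Sum>j\<in>{1,2}. \<Sum>k\<in>{1,2}. c i j k * comp x k / (comp x i * comp x j))"

text \<open>Unit-volume G-invariant metrics (volume normalised as that of g_B).\<close>
definition M1 :: "(nat \<Rightarrow> nat) \<Rightarrow> (real \<times> real) set" where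
  "M1 d = {x. fst x > 0 \<and> snd x > 0 \<and> fst x ^ d 1 * snd x ^ d 2 = 1}"

text \<open>Critical points of scal restricted to M1 (= unit-volume G-invariant Einstein metrics).\<close>
definition crit_point :: "(nat \<Rightarrow> nat \<Rightarrow> nat \<Rightarrow> real) \<Rightarrow> (nat \<Rightarrow> nat) \<Rightarrow> real \<times> real \<Rightarrow> bool" where
  "crit_point c d p \<longleftrightarrow> p \<in> M1 d \<and>
     (\<forall>\<gamma> :: real \<Rightarrow> real \<times> real. \<gamma> 0 = p \<and> (\<forall>t. \<gamma> t \<in> M1 d) \<and> \<gamma> differentiable (at 0)
        \<longrightarrow> ((\<lambda>t. scal c d (\<gamma> t)) has_real_derivative 0) (at 0))"

definition global_max_M1 :: "(nat \<Rightarrow> nat \<Rightarrow> nat \<Rightarrow> real) \<Rightarrow> (nat \<Rightarrow> nat) \<Rightarrow> real \<times> real \<Rightarrow> bool" where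
  "global_max_M1 c d p \<longleftrightarrow> p \<in> M1 d \<and> (\<forall>q\<in>M1 d. scal c d q \<le> scal c d p)"

definition local_max_M1 :: "(nat \<Rightarrow> nat \<Rightarrow> nat \<Rightarrow> real) \<Rightarrow> (nat \<Rightarrow> nat) \<Rightarrow> real \<times> real \<Rightarrow> bool" where
  "local_max_M1 c d p \<longleftrightarrow> p \<in> M1 d \<and>
     (\<exists>e>0. \<forall>q\<in>M1 d. dist q p < e \<longrightarrow> scal c d q \<le> scal c d p)"

definition local_min_M1 :: "(nat \<Rightarrow> nat \<Rightarrow> nat \<Rightarrow> real) \<Rightarrow> (nat \<Rightarrow> nat) \<Rightarrow> real \<times> real \<Rightarrow> bool" where
  "local_min_M1 c d p \<longleftrightarrow> p \<in> M1 d \<and>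
     (\<exists>e>0. \<forall>q\<in>M1 d. dist q p < e \<longrightarrow> scal c d p \<le> scal c d q)"

end

theory Submission
  imports Defs
begin

text \<open>
  With \<open>d\<^sub>1 = d\<^sub>2\<close> the unit-volume metrics are the points \<open>(t, 1/t)\<close>, \<open>t > 0\<close>, and with
  \<open>[111] = [222]\<close>, \<open>[112] = [122]\<close> the scalar curvature there depends only on
  \<open>s = t + 1/t \<ge> 2\<close>: it is the cubic \<open>\<alpha> s - \<beta> s\<^sup>3\<close> with \<open>\<beta> = [112]/4 > 0\<close>.
  Its derivative in \<open>t\<close> is \<open>(\<alpha> - 3 \<beta> s\<^sup>2) (1 - 1/t\<^sup>2)\<close>, so \<open>g\<^sub>B\<close> (\<open>t = 1\<close>) is always
  critical, and there are further critical points exactly when the peak \<open>s\<^sub>0\<close> of the cubic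
  lies beyond \<open>s = 2\<close>. They are then the two solutions \<open>t, 1/t\<close> of \<open>t + 1/t = s\<^sub>0\<close>, both global
  maxima, while \<open>g\<^sub>B\<close> sits on the increasing branch of the cubic and is a local minimum.
\<close>

lemma plus_inverse_eq_iff:
  fixes t u :: real
  assumes "t > 0" "u > 0"
  shows "t + 1/t = u + 1/u \<longleftrightarrow> t = u \<or> t = 1/u"
proof -
  have "t + 1/t - (u + 1/u) = (t - u) * (t * u - 1) / (t * u)"
    using assms by (simp add: field_simps)
  then have "t + 1/t = u + 1/u \<longleftrightarrow> (t - u) * (t * u - 1) = 0"
    using assms by auto
  also have "\<dots> \<longleftrightarrow> t = u \<or> t = 1/u"
    using assms by (simp add: eq_divide_eq)
  finally show ?thesis .
qed

lemma plus_inverse_attains: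
  fixes s :: real
  assumes "s \<ge> 2"
  obtains t where "t \<ge> 1" "t + 1/t = s"
proof
  define r where "r = sqrt (s\<^sup>2 - 4)"
  have "s\<^sup>2 \<ge> 2\<^sup>2"
    using assms by (intro power_mono) auto
  then have r: "r \<ge> 0" "r\<^sup>2 = s\<^sup>2 - 4"
    unfolding r_def by auto
  show "(s + r) / 2 \<ge> 1"
    using assms r by simp
  have "(s + r) * (s - r) = 4"
    using r by (simp add: algebra_simps power2_eq_square)
  then show "(s + r) / 2 + 1 / ((s + r) / 2) = s"
    using assms r by (simp add: field_simps)
qed

definition scal_profile :: "real \<Rightarrow> real \<Rightarrow> real \<Rightarrow> real" where
  "scal_profile \<alpha> \<beta> s = \<alpha> * s - \<beta> * s ^ 3"

lemma scal_profile_has_real_derivative: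
  "(scal_profile \<alpha> \<beta> has_real_derivative \<alpha> - 3 * \<beta> * s\<^sup>2) (at s)"
  unfolding scal_profile_def by (auto intro!: derivative_eq_intros)

lemma scal_profile_le_at_2:
  assumes "\<beta> \<ge> 0" "\<alpha> \<le> 12 * \<beta>" "s \<ge> 2"
  shows "scal_profile \<alpha> \<beta> s \<le> scal_profile \<alpha> \<beta> 2"
proof -
  have "scal_profile \<alpha> \<beta> 2 - scal_profile \<alpha> \<beta> s = (s - 2) * (\<beta> * (s\<^sup>2 + 2 * s + 4) - \<alpha>)"
    unfolding scal_profile_def by (simp add: algebra_simps power2_eq_square power3_eq_cube)
  moreover have "s\<^sup>2 + 2 * s + 4 \<ge> 12"
    using assms(3) power_mono[of 2 s 2] by simp
  then have "\<beta> * (s\<^sup>2 + 2 * s + 4) \<ge> \<alpha>"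
    using assms(1,2) mult_left_mono[of 12 "s\<^sup>2 + 2 * s + 4" \<beta>] by linarith
  moreover have "(s - 2) * (\<beta> * (s\<^sup>2 + 2 * s + 4) - \<alpha>) \<ge> 0"
    using assms(3) \<open>\<beta> * (s\<^sup>2 + 2 * s + 4) \<ge> \<alpha>\<close> by simp
  ultimately show ?thesis
    by linarith
qed

lemma scal_profile_le_peak:
  assumes "\<beta> \<ge> 0" "s\<^sub>0 \<ge> 0" "\<alpha> = 3 * \<beta> * s\<^sub>0\<^sup>2" "s \<ge> 0"
  shows "scal_profile \<alpha> \<beta> s \<le> scal_profile \<alpha> \<beta> s\<^sub>0"
proof -
  have "scal_profile \<alpha> \<beta> s\<^sub>0 - scal_profile \<alpha> \<beta> s = \<beta> * (s\<^sub>0 - s)\<^sup>2 * (2 * s\<^sub>0 + s)"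
    unfolding scal_profile_def using assms(3) by (simp add: algebra_simps power2_eq_square power3_eq_cube)
  moreover have "\<beta> * (s\<^sub>0 - s)\<^sup>2 * (2 * s\<^sub>0 + s) \<ge> 0"
    using assms by simp
  ultimately show ?thesis
    by simp
qed

lemma scal_profile_strict_mono_on:
  assumes "\<beta> > 0" "\<alpha> = 3 * \<beta> * s\<^sub>0\<^sup>2"
  shows "strict_mono_on {0..s\<^sub>0} (scal_profile \<alpha> \<beta>)"
proof (rule strict_mono_onI)
  fix x y assume "x \<in> {0..s\<^sub>0}" "y \<in> {0..s\<^sub>0}" "x < y"
  then have "x * x < s\<^sub>0 * s\<^sub>0" "y * y \<le> s\<^sub>0 * s\<^sub>0"
    by (auto intro: mult_strict_mono mult_mono)
  moreover have "x * y < s\<^sub>0 * y" "s\<^sub>0 * y \<le> s\<^sub>0 * s\<^sub>0"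
    using \<open>x \<in> _\<close> \<open>y \<in> _\<close> \<open>x < y\<close> by (auto intro: mult_strict_right_mono mult_left_mono)
  ultimately have "x\<^sup>2 + x * y + y\<^sup>2 < 3 * s\<^sub>0\<^sup>2"
    by (simp add: power2_eq_square)
  then have "\<alpha> - \<beta> * (x\<^sup>2 + x * y + y\<^sup>2) > 0"
    using assms by simp
  moreover have "scal_profile \<alpha> \<beta> y - scal_profile \<alpha> \<beta> x = (y - x) * (\<alpha> - \<beta> * (x\<^sup>2 + x * y + y\<^sup>2))"
    unfolding scal_profile_def by (simp add: algebra_simps power2_eq_square power3_eq_cube)
  ultimately show "scal_profile \<alpha> \<beta> x < scal_profile \<alpha> \<beta> y"
    using \<open>x < y\<close> by (metis diff_gt_0_iff_gt mult_pos_pos)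
qed

lemma mem_M1_iff_equal_dims:
  assumes "d 1 > 0" "d 1 = d 2"
  shows "x \<in> M1 d \<longleftrightarrow> fst x > 0 \<and> snd x = 1 / fst x"
proof
  assume x: "x \<in> M1 d"
  then have pos: "fst x > 0" "snd x > 0" and "(fst x * snd x) ^ d 1 = 1"
    using assms(2) by (auto simp: M1_def power_mult_distrib)
  then have "fst x * snd x = 1"
    using assms(1) power_eq_imp_eq_base[of "fst x * snd x" "d 1" 1] by simp
  then show "fst x > 0 \<and> snd x = 1 / fst x"
    using pos by (simp add: field_simps)
next
  assume "fst x > 0 \<and> snd x = 1 / fst x"
  then show "x \<in> M1 d"
    using assms(2) by (simp add: M1_def power_mult_distrib[symmetric])
qed

lemma global_max_M1_imp_local_max_M1:
  "global_max_M1 c d p \<Longrightarrow> local_max_M1 c d p"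
  unfolding global_max_M1_def local_max_M1_def by (auto intro: exI[of _ 1])

lemma scal_has_real_derivative_along_M1:
  assumes dims: "d 1 > 0" "d 1 = d 2"
    and f: "\<And>u. u > 0 \<Longrightarrow> scal c d (u, 1/u) = f u"
    and f': "(f has_real_derivative D) (at t)"
    and \<gamma>: "\<gamma> 0 = (t, 1/t)" "\<And>u. \<gamma> u \<in> M1 d"
    and h': "((\<lambda>u. fst (\<gamma> u)) has_real_derivative h') (at 0)"
  shows "((\<lambda>u. scal c d (\<gamma> u)) has_real_derivative D * h') (at 0)"
proof -
  have "scal c d (\<gamma> u) = f (fst (\<gamma> u))" for u
    using f[of "fst (\<gamma> u)"] \<gamma>(2)[of u] mem_M1_iff_equal_dims[OF dims, of "\<gamma> u"]
    by (metis prod.collapse)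
  moreover have "fst (\<gamma> 0) = t"
    using \<gamma>(1) by simp
  then have "((\<lambda>u. f (fst (\<gamma> u))) has_real_derivative D * h') (at 0)"
    using DERIV_chain2[OF _ h'] f' by simp
  ultimately show ?thesis
    by simp
qed

lemma crit_point_iff_deriv_zero:
  assumes dims: "d 1 > 0" "d 1 = d 2"
    and f: "\<And>u. u > 0 \<Longrightarrow> scal c d (u, 1/u) = f u"
    and f': "\<And>u. u > 0 \<Longrightarrow> (f has_real_derivative f' u) (at u)"
  shows "crit_point c d p \<longleftrightarrow> (\<exists>t>0. p = (t, 1/t) \<and> f' t = 0)"
proof
  assume crit: "crit_point c d p"
  define t where "t = fst p"
  have t: "t > 0" "p = (t, 1/t)"
    using crit mem_M1_iff_equal_dims[OF dims, of p] unfolding crit_point_def t_def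
    by (auto simp: prod_eq_iff)
  define \<gamma> where "\<gamma> u = (t * exp u, 1 / (t * exp u))" for u
  have \<gamma>_M1: "\<gamma> u \<in> M1 d" for u
    using t mem_M1_iff_equal_dims[OF dims] by (simp add: \<gamma>_def)
  have fst_\<gamma>: "((\<lambda>u. fst (\<gamma> u)) has_real_derivative t) (at 0)"
    unfolding \<gamma>_def by (auto intro!: derivative_eq_intros)
  have "((\<lambda>u. 1 / (t * exp u)) has_real_derivative - 1 / t) (at 0)"
    using t by (auto intro!: derivative_eq_intros simp: field_simps)
  then have \<gamma>_differentiable: "\<gamma> differentiable at 0"
    using fst_\<gamma> unfolding \<gamma>_def
    by (auto intro!: differentiable_Pair simp: real_differentiable_def)
  have "((\<lambda>u. scal c d (\<gamma> u)) has_real_derivative f' t * t) (at 0)"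
    using scal_has_real_derivative_along_M1[OF dims f f'[OF t(1)] _ \<gamma>_M1 fst_\<gamma>] by (simp add: \<gamma>_def)
  moreover have "((\<lambda>u. scal c d (\<gamma> u)) has_real_derivative 0) (at 0)"
    using \<gamma>_differentiable crit \<gamma>_M1 t(2) unfolding crit_point_def \<gamma>_def by auto
  ultimately have "f' t * t = 0"
    by (rule DERIV_unique)
  then show "\<exists>t>0. p = (t, 1/t) \<and> f' t = 0"
    using t by auto
next
  assume "\<exists>t>0. p = (t, 1/t) \<and> f' t = 0"
  then obtain t where t: "t > 0" "p = (t, 1/t)" "f' t = 0"
    by blast
  show "crit_point c d p"
    unfolding crit_point_def
  proof (intro conjI allI impI)
    show "p \<in> M1 d"
      using t mem_M1_iff_equal_dims[OF dims] by simp
    fix \<gamma> :: "real \<Rightarrow> real \<times> real"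
    assume \<gamma>: "\<gamma> 0 = p \<and> (\<forall>u. \<gamma> u \<in> M1 d) \<and> \<gamma> differentiable at 0"
    then have "(\<lambda>u. fst (\<gamma> u)) differentiable at 0"
      by (auto intro: differentiable_compose[of fst] bounded_linear_imp_differentiable[OF bounded_linear_fst])
    then obtain h' where "((\<lambda>u. fst (\<gamma> u)) has_real_derivative h') (at 0)"
      using DERIV_deriv_iff_real_differentiable by blast
    from scal_has_real_derivative_along_M1[OF dims f f'[OF t(1)] _ _ this]
    show "((\<lambda>u. scal c d (\<gamma> u)) has_real_derivative 0) (at 0)"
      using \<gamma> t by simp
  qed
qed

locale symmetric_two_summands =
  fixes c :: "nat \<Rightarrow> nat \<Rightarrow> nat \<Rightarrow> real" and d :: "nat \<Rightarrow> nat"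
  assumes d_pos: "d 1 > 0" and d_eq: "d 1 = d 2"
    and c_sym: "\<And>i j k. i \<in> {1,2} \<Longrightarrow> j \<in> {1,2} \<Longrightarrow> k \<in> {1,2} \<Longrightarrow>
                  c i j k = c j i k \<and> c i j k = c i k j"
    and c111_eq: "c 1 1 1 = c 2 2 2" and c112_eq: "c 1 1 2 = c 1 2 2" and c112_pos: "c 1 1 2 > 0"
begin

definition \<alpha> :: real where
  "\<alpha> = real (d 1) / 2 - c 1 1 1 / 4 + c 1 1 2 / 4"

definition \<beta> :: real where
  "\<beta> = c 1 1 2 / 4"

lemma \<beta>_pos: "\<beta> > 0"
  using c112_pos by (simp add: \<beta>_def)

lemmas mem_M1_iff = mem_M1_iff_equal_dims[OF d_pos d_eq]

lemma scal_inverse_pair: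
  assumes "t \<noteq> 0"
  shows "scal c d (t, 1/t) = scal_profile \<alpha> \<beta> (t + 1/t)"
proof -
  have "c 1 2 1 = c 1 1 2" "c 2 1 1 = c 1 1 2" "c 2 1 2 = c 1 1 2" "c 2 2 1 = c 1 1 2"
    using c_sym[of 1 1 2] c_sym[of 2 1 1] c_sym[of 2 1 2] c_sym[of 1 2 2] c112_eq by auto
  then show ?thesis
    using assms d_eq c111_eq c112_eq
    by (simp add: scal_def comp_def scal_profile_def \<alpha>_def \<beta>_def field_simps power3_eq_cube)
qed

lemma scal_eq_on_M1:
  assumes "q \<in> M1 d"
  shows "scal c d q = scal_profile \<alpha> \<beta> (fst q + 1 / fst q)"
proof -
  have "q = (fst q, 1 / fst q)" "fst q > 0"
    using assms by (auto simp: mem_M1_iff prod_eq_iff)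
  then show ?thesis
    using scal_inverse_pair[of "fst q"] by simp
qed

lemma crit_point_iff:
  "crit_point c d p \<longleftrightarrow> (\<exists>t>0. p = (t, 1/t) \<and> (t = 1 \<or> 3 * \<beta> * (t + 1/t)\<^sup>2 = \<alpha>))"
proof -
  define f' where "f' t = (\<alpha> - 3 * \<beta> * (t + 1/t)\<^sup>2) * (1 - 1 / t\<^sup>2)" for t
  have "((\<lambda>u. u + 1/u) has_real_derivative 1 - 1 / t\<^sup>2) (at t)" if "t > 0" for t
    using that by (auto intro!: derivative_eq_intros simp: field_simps power2_eq_square)
  then have "((\<lambda>u. scal_profile \<alpha> \<beta> (u + 1/u)) has_real_derivative f' t) (at t)" if "t > 0" for t
    using DERIV_chain2[OF scal_profile_has_real_derivative] that unfolding f'_def by blast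
  moreover have "f' t = 0 \<longleftrightarrow> t = 1 \<or> 3 * \<beta> * (t + 1/t)\<^sup>2 = \<alpha>" if "t > 0" for t
  proof -
    have "1 - 1 / t\<^sup>2 = 0 \<longleftrightarrow> t\<^sup>2 = 1"
      using that by (simp add: field_simps)
    then show ?thesis
      using that power2_eq_1_iff[of t] unfolding f'_def mult_eq_0_iff by auto
  qed
  ultimately show ?thesis
    using crit_point_iff_deriv_zero[OF d_pos d_eq, of c "\<lambda>u. scal_profile \<alpha> \<beta> (u + 1/u)" f' p]
      scal_inverse_pair by auto
qed

lemma crit_point_1_1: "crit_point c d (1, 1)"
  using crit_point_iff[of "(1, 1)"] by auto

lemma scal_1_1: "scal c d (1, 1) = scal_profile \<alpha> \<beta> 2"
  using scal_inverse_pair[of 1] by simp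

lemma plus_inverse_fst_ge_2: "q \<in> M1 d \<Longrightarrow> fst q + 1 / fst q \<ge> 2"
  using plus_inverse_ge_2[of "fst q"] by (simp add: mem_M1_iff inverse_eq_divide)

lemma global_max_M1_1_1:
  assumes "\<alpha> \<le> 12 * \<beta>"
  shows "global_max_M1 c d (1, 1)"
  unfolding global_max_M1_def
proof (intro conjI ballI)
  show "(1, 1) \<in> M1 d"
    by (simp add: mem_M1_iff)
  fix q assume "q \<in> M1 d"
  then show "scal c d q \<le> scal c d (1, 1)"
    using scal_profile_le_at_2[OF less_imp_le[OF \<beta>_pos] assms plus_inverse_fst_ge_2]
    by (simp add: scal_eq_on_M1 scal_1_1)
qed

lemma peak_beyond_2:
  assumes "\<alpha> > 12 * \<beta>"
  obtains s\<^sub>0 where "s\<^sub>0 > 2" "\<alpha> = 3 * \<beta> * s\<^sub>0\<^sup>2"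
proof
  have ratio: "\<alpha> / (3 * \<beta>) > 2\<^sup>2"
    using assms \<beta>_pos by (simp add: field_simps)
  then show "sqrt (\<alpha> / (3 * \<beta>)) > 2"
    using real_less_rsqrt by blast
  show "\<alpha> = 3 * \<beta> * (sqrt (\<alpha> / (3 * \<beta>)))\<^sup>2"
    using ratio \<beta>_pos by simp
qed

lemma crit_points_unique:
  assumes "\<alpha> \<le> 12 * \<beta>"
  shows "{p. crit_point c d p} = {(1, 1)}"
proof -
  have "t = 1" if "t > 0" "3 * \<beta> * (t + 1/t)\<^sup>2 = \<alpha>" for t
  proof -
    have "3 * \<beta> * (t + 1/t)\<^sup>2 \<le> 3 * \<beta> * 2\<^sup>2"
      using that assms by simp
    then have "(t + 1/t)\<^sup>2 \<le> 2\<^sup>2"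
      using \<beta>_pos by (simp add: mult_le_cancel_left_pos)
    moreover have "t + 1/t \<ge> 2"
      using plus_inverse_ge_2[of t] that(1) by (simp add: inverse_eq_divide)
    ultimately have "t + 1/t = 1 + 1/1"
      using power2_le_imp_le[of "t + 1/t" 2] by simp
    then show "t = 1"
      using plus_inverse_eq_iff[of t 1] that(1) by simp
  qed
  then show ?thesis
    using crit_point_iff crit_point_1_1 by auto
qed

context
  fixes s\<^sub>0 :: real
  assumes s\<^sub>0_gt_2: "s\<^sub>0 > 2" and \<alpha>_eq: "\<alpha> = 3 * \<beta> * s\<^sub>0\<^sup>2"
begin

lemma global_max_M1_peak:
  assumes "t > 0" "t + 1/t = s\<^sub>0"
  shows "global_max_M1 c d (t, 1/t)"
  unfolding global_max_M1_def
proof (intro conjI ballI)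
  show "(t, 1/t) \<in> M1 d"
    using assms(1) by (simp add: mem_M1_iff)
  fix q assume q: "q \<in> M1 d"
  have "fst q + 1 / fst q \<ge> 0"
    using plus_inverse_fst_ge_2[OF q] by simp
  then show "scal c d q \<le> scal c d (t, 1/t)"
    using scal_profile_le_peak[OF less_imp_le[OF \<beta>_pos] _ \<alpha>_eq] s\<^sub>0_gt_2 assms
    by (simp add: scal_eq_on_M1[OF q] scal_inverse_pair)
qed

lemma not_global_max_M1_1_1: "\<not> global_max_M1 c d (1, 1)"
proof -
  obtain t where "t \<ge> 1" "t + 1/t = s\<^sub>0"
    using plus_inverse_attains s\<^sub>0_gt_2 by (metis less_imp_le)
  then have "(t, 1/t) \<in> M1 d" "scal c d (t, 1/t) = scal_profile \<alpha> \<beta> s\<^sub>0"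
    using scal_inverse_pair[of t] by (simp_all add: mem_M1_iff)
  then have "scal_profile \<alpha> \<beta> s\<^sub>0 \<le> scal c d (1, 1)" if "global_max_M1 c d (1, 1)"
    using that unfolding global_max_M1_def by metis
  moreover have "scal_profile \<alpha> \<beta> 2 < scal_profile \<alpha> \<beta> s\<^sub>0"
    using scal_profile_strict_mono_on[OF \<beta>_pos \<alpha>_eq] s\<^sub>0_gt_2 by (simp add: strict_mono_onD)
  ultimately show ?thesis
    by (auto simp: scal_1_1)
qed

lemma local_min_M1_1_1: "local_min_M1 c d (1, 1)"
  unfolding local_min_M1_def
proof (intro conjI exI[of _ "s\<^sub>0 / 2 - 1"] ballI impI)
  show "(1, 1) \<in> M1 d"
    by (simp add: mem_M1_iff)
  show "s\<^sub>0 / 2 - 1 > 0"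
    using s\<^sub>0_gt_2 by simp
  fix q assume q: "q \<in> M1 d" "dist q (1, 1) < s\<^sub>0 / 2 - 1"
  define s where "s = fst q + 1 / fst q"
  have "snd q = 1 / fst q"
    using q(1) by (simp add: mem_M1_iff)
  then have "\<bar>fst q - 1\<bar> < s\<^sub>0 / 2 - 1" "\<bar>1 / fst q - 1\<bar> < s\<^sub>0 / 2 - 1"
    using q(2) dist_fst_le[of q "(1, 1)"] dist_snd_le[of q "(1, 1)"] by (auto simp: dist_real_def)
  then have "fst q - 1 < s\<^sub>0 / 2 - 1" "1 / fst q - 1 < s\<^sub>0 / 2 - 1"
    by (meson abs_less_iff)+
  then have "s \<le> s\<^sub>0"
    unfolding s_def by linarith
  moreover have "s \<ge> 2"
    using plus_inverse_fst_ge_2[OF q(1)] by (simp add: s_def)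
  ultimately have "scal_profile \<alpha> \<beta> 2 \<le> scal_profile \<alpha> \<beta> s"
    using strict_mono_on_leD[OF scal_profile_strict_mono_on[OF \<beta>_pos \<alpha>_eq], of 2 s] s\<^sub>0_gt_2
    by simp
  then show "scal c d (1, 1) \<le> scal c d q"
    using q(1) by (simp add: scal_eq_on_M1 scal_1_1 s_def)
qed

lemma crit_points_peak:
  assumes "t > 0" "t + 1/t = s\<^sub>0"
  shows "{p. crit_point c d p} = {(1, 1), (t, 1/t), (1/t, t)}"
proof -
  have "3 * \<beta> * (u + 1/u)\<^sup>2 = \<alpha> \<longleftrightarrow> u + 1/u = s\<^sub>0" if "u > 0" for u
    using \<alpha>_eq \<beta>_pos s\<^sub>0_gt_2 that power2_eq_iff_nonneg[of "u + 1/u" s\<^sub>0] by simp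
  also have "\<dots> u \<longleftrightarrow> u = t \<or> u = 1/t" if "u > 0" for u
    using plus_inverse_eq_iff[OF that assms(1)] assms(2) by simp
  finally have "crit_point c d p \<longleftrightarrow> (\<exists>u>0. p = (u, 1/u) \<and> (u = 1 \<or> u = t \<or> u = 1/t))" for p
    unfolding crit_point_iff by blast
  then show ?thesis
    using assms(1) by auto
qed

end

end

theorem lemma6p2:
  fixes c :: "nat \<Rightarrow> nat \<Rightarrow> nat \<Rightarrow> real" and d :: "nat \<Rightarrow> nat"
  assumes dpos: "d 1 > 0" "d 2 > 0"
    and cnonneg: "\<And>i j k. c i j k \<ge> 0"
    and csym: "\<And>i j k. i \<in> {1,2} \<Longrightarrow> j \<in> {1,2} \<Longrightarrow> k \<in> {1,2} \<Longrightarrow>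
                  c i j k = c j i k \<and> c i j k = c i k j"
    and einstein_gB: "crit_point c d (1, 1)"
    and deq: "d 1 = d 2"
    and c111: "c 1 1 1 = c 2 2 2"
    and c112: "c 1 1 2 = c 1 2 2" "c 1 1 2 > 0"
  shows "(global_max_M1 c d (1, 1) \<longleftrightarrow> {p. crit_point c d p} = {(1, 1)})
       \<and> (\<not> global_max_M1 c d (1, 1) \<longrightarrow>
            local_min_M1 c d (1, 1) \<and>
            (\<exists>g1 g2. g1 \<noteq> g2 \<and> g1 \<noteq> (1, 1) \<and> g2 \<noteq> (1, 1) \<and>
               {p. crit_point c d p} = {(1, 1), g1, g2} \<and>
               local_max_M1 c d g1 \<and> local_max_M1 c d g2 \<and>
               (global_max_M1 c d g1 \<or> global_max_M1 c d g2)))"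
proof -
  interpret symmetric_two_summands c d
    using dpos(1) deq csym c111 c112 by unfold_locales
  show ?thesis
  proof (cases "\<alpha> \<le> 12 * \<beta>")
    case True
    then show ?thesis
      using global_max_M1_1_1 crit_points_unique by simp
  next
    case False
    then obtain s\<^sub>0 where s\<^sub>0: "s\<^sub>0 > 2" "\<alpha> = 3 * \<beta> * s\<^sub>0\<^sup>2"
      using peak_beyond_2 by (metis not_le)
    then obtain t where t: "t \<ge> 1" "t + 1/t = s\<^sub>0"
      using plus_inverse_attains by (metis less_imp_le)
    then have "t \<noteq> 1"
      using s\<^sub>0(1) by auto
    then have "1 < t" "1/t < 1"
      using t(1) by auto
    then have "(t, 1/t) \<noteq> (1/t, t)" "(t, 1/t) \<noteq> (1, 1)" "(1/t, t) \<noteq> (1, 1)"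
      by (metis less_irrefl less_trans prod.inject)+
    moreover have "global_max_M1 c d (t, 1/t)" "global_max_M1 c d (1/t, t)"
      using global_max_M1_peak[OF s\<^sub>0, of t] global_max_M1_peak[OF s\<^sub>0, of "1/t"] t
      by (simp_all add: add.commute)
    ultimately show ?thesis
      using not_global_max_M1_1_1[OF s\<^sub>0] local_min_M1_1_1[OF s\<^sub>0] crit_points_peak[OF s\<^sub>0, of t] t
        global_max_M1_imp_local_max_M1
      by (intro conjI impI exI[of _ "(t, 1/t)"] exI[of _ "(1/t, t)"]) auto
  qed
qed

end
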